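(* Let $n\ge2$ and let $A=(a_{ij})$ be an $n\times n$ nonnegative irreducible matrix with row sums $r_1\ge r_2\ge\cdots\ge r_n$. Let $S=\min_{1\le i\le n}a_{ii}$ and $T=\min_{i\ne j}a_{ij}$. Then \[\rho(A)\ge \frac{r_n+S-T+\sqrt{(r_n-S+T)^2+4T\sum_{k=1}^{n-1}(r_k-r_n)}}{2}.\] Equality holds if and only if $r_1=\cdots=r_n$, or $T>0$ and for some $2\le t\le n$: (i) $a_{kk}=S$ for $1\le k\le t-1$; (ii) $a_{kl}=T$ for all $1\le k\le n$, $1\le l\le t-1$, $k\ne l$; (iii) $r_t=\cdots=r_n$.
   Context: $\rho(A)$ denotes the spectral radius of $A$. *)

theory Defs
  imports "Jordan_Normal_Form.Spectral_Radius"
begin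

text \<open>Row sum of row i of a real square matrix (0-based indices).\<close>
definition row_sum :: "real mat \<Rightarrow> nat \<Rightarrow> real" where
  "row_sum A i = (\<Sum>j<dim_col A. A $$ (i, j))"

definition nonneg_mat :: "real mat \<Rightarrow> bool" where
  "nonneg_mat A \<longleftrightarrow> (\<forall>i<dim_row A. \<forall>j<dim_col A. A $$ (i, j) \<ge> 0)"

text \<open>An n x n matrix is reducible iff, after a simultaneous permutation of rows and columns,
  it is block upper triangular; i.e. there is a nonempty proper subset I of the index set with
  A(i,j) = 0 for all i in I, j not in I.\<close>
definition reducible_mat :: "real mat \<Rightarrow> bool" where
  "reducible_mat A \<longleftrightarrow> (\<exists>I. I \<noteq> {} \<and> I \<subset> {..<dim_row A} \<and>
      (\<forall>i\<in>I. \<forall>j\<in>{..<dim_row A} - I. A $$ (i, j) = 0))"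

definition irreducible_mat :: "real mat \<Rightarrow> bool" where
  "irreducible_mat A \<longleftrightarrow> \<not> reducible_mat A"

definition rho :: "real mat \<Rightarrow> real" where
  "rho A = spectral_radius (map_mat complex_of_real A)"

end

theory Submission
  imports Defs
begin

text \<open>By the Collatz--Wielandt bounds, a positive \<open>x\<close> with \<open>A x \<ge> \<lambda> x\<close> gives \<open>\<rho>(A) \<ge> \<lambda>\<close>, with
  equality for irreducible \<open>A\<close> iff \<open>A x = \<lambda> x\<close>. With \<open>d\<^sub>j = r\<^sub>j - r\<^sub>n \<ge> 0\<close>, let \<open>c > 0\<close> solve
  \<open>c\<^sup>2 - (r\<^sub>n - S + T) c = T \<Sum>\<^sub>j d\<^sub>j\<close> and take \<open>x\<^sub>j = 1 + d\<^sub>j / c\<close>, \<open>\<lambda> = c + S - T\<close> (the claimed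
  bound). Then \<open>c (A x - \<lambda> x)\<^sub>i = \<Sum>\<^sub>j (a\<^sub>i\<^sub>j - s\<^sub>i\<^sub>j) d\<^sub>j \<ge> 0\<close>, where \<open>s\<^sub>i\<^sub>j\<close> is \<open>S\<close> on and \<open>T\<close> off the
  diagonal, so equality means \<open>a\<^sub>i\<^sub>j = s\<^sub>i\<^sub>j\<close> in every column with \<open>r\<^sub>j > r\<^sub>n\<close>; as the row sums
  decrease these columns form an initial segment, giving (i)--(iii). If \<open>T = 0\<close> then \<open>c\<close> may
  vanish, and \<open>x = 1\<close> gives the bound \<open>r\<^sub>n\<close> directly.\<close>

definition matvec :: "real mat \<Rightarrow> (nat \<Rightarrow> real) \<Rightarrow> nat \<Rightarrow> real" where
  "matvec A x i = (\<Sum>j<dim_col A. A $$ (i, j) * x j)"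

lemma row_sum_eq_matvec_one: "row_sum A i = matvec A (\<lambda>_. 1) i"
  by (simp add: row_sum_def matvec_def)

lemma matvec_nonneg:
  assumes "nonneg_mat A" "i < dim_row A" "\<And>j. j < dim_col A \<Longrightarrow> 0 \<le> x j"
  shows "0 \<le> matvec A x i"
  using assms unfolding matvec_def nonneg_mat_def by (auto intro!: sum_nonneg)

lemma matvec_mono:
  assumes "nonneg_mat A" "i < dim_row A" "\<And>j. j < dim_col A \<Longrightarrow> x j \<le> y j"
  shows "matvec A x i \<le> matvec A y i"
  using assms unfolding matvec_def nonneg_mat_def by (auto intro!: sum_mono mult_left_mono)

lemma matvec_add: "matvec A (\<lambda>j. x j + y j) i = matvec A x i + matvec A y i"
  by (simp add: matvec_def algebra_simps sum.distrib)

lemma matvec_diff_scale: "matvec A (\<lambda>j. x j - c * y j) i = matvec A x i - c * matvec A y i"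
  by (simp add: matvec_def algebra_simps sum_subtractf sum_distrib_left)

lemma matvec_one_mat: "i < n \<Longrightarrow> matvec (1\<^sub>m n) x i = x i"
  by (simp add: matvec_def one_mat_def if_distrib[of "\<lambda>c. c * _"] cong: if_cong)

lemma matvec_mult:
  assumes "P \<in> carrier_mat n n" "R \<in> carrier_mat n n" "i < n"
  shows "matvec (P * R) x i = matvec P (matvec R x) i"
proof -
  have "matvec (P * R) x i = (\<Sum>j<n. \<Sum>l<n. P $$ (i, l) * R $$ (l, j) * x j)"
    using assms by (simp add: matvec_def scalar_prod_def atLeast0LessThan sum_distrib_right)
  also have "\<dots> = matvec P (matvec R x) i"
    using assms by (subst sum.swap) (simp add: matvec_def sum_distrib_left mult.assoc)
  finally show ?thesis .
qed

lemma nonneg_mat_mult: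
  assumes "P \<in> carrier_mat n n" "R \<in> carrier_mat n n" "nonneg_mat P" "nonneg_mat R"
  shows "nonneg_mat (P * R)"
  using assms unfolding nonneg_mat_def
  by (auto simp: scalar_prod_def intro!: sum_nonneg mult_nonneg_nonneg)

lemma nonneg_mat_pow:
  assumes "R \<in> carrier_mat n n" "nonneg_mat R"
  shows "nonneg_mat (R ^\<^sub>m k)"
proof (induction k)
  case 0
  then show ?case using assms by (simp add: nonneg_mat_def one_mat_def)
next
  case (Suc k)
  then show ?case using assms by (simp add: nonneg_mat_mult[of _ n])
qed

lemma matvec_pow_ge:
  assumes R: "R \<in> carrier_mat n n" and nn: "nonneg_mat R" and q: "0 \<le> q"
    and ge: "\<And>i. i < n \<Longrightarrow> q * x i \<le> matvec R x i" and i: "i < n"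
  shows "q ^ k * x i \<le> matvec (R ^\<^sub>m k) x i"
  using i
proof (induction k arbitrary: i)
  case 0
  then show ?case using R by (simp add: matvec_one_mat)
next
  case (Suc k)
  have P: "R ^\<^sub>m k \<in> carrier_mat n n" "nonneg_mat (R ^\<^sub>m k)"
    using R nn by (auto intro: nonneg_mat_pow)
  have "q ^ Suc k * x i = q * (q ^ k * x i)" by simp
  also have "\<dots> \<le> q * matvec (R ^\<^sub>m k) x i" using Suc q by (simp add: mult_left_mono)
  also have "\<dots> = matvec (R ^\<^sub>m k) (\<lambda>j. q * x j) i"
    by (simp add: matvec_def sum_distrib_left ac_simps)
  also have "\<dots> \<le> matvec (R ^\<^sub>m k) (matvec R x) i"
    using P Suc.prems ge by (intro matvec_mono) auto
  also have "\<dots> = matvec (R ^\<^sub>m Suc k) x i"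
    using matvec_mult[OF P(1) R Suc.prems] by simp
  finally show ?case .
qed

lemma mult_mat_vec_index_sum:
  assumes "B \<in> carrier_mat n n" "v \<in> carrier_vec n" "i < n"
  shows "(B *\<^sub>v v) $ i = (\<Sum>j<n. B $$ (i, j) * v $ j)"
  using assms by (auto simp: scalar_prod_def atLeast0LessThan intro!: sum.cong)

lemma eigenvector_smult_mat:
  assumes "B \<in> carrier_mat n n" "eigenvector B v e"
  shows "eigenvector (c \<cdot>\<^sub>m B) v (c * e)"
proof -
  have "v \<in> carrier_vec n" using assms unfolding eigenvector_def by simp
  then have "(c \<cdot>\<^sub>m B) *\<^sub>v v = c \<cdot>\<^sub>v (B *\<^sub>v v)"
    using assms(1) by (intro eq_vecI) (auto simp: scalar_prod_def sum_distrib_left ac_simps)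
  then show ?thesis
    using assms unfolding eigenvector_def by (simp add: smult_smult_assoc)
qed

lemma spectral_radius_smult_mat_ge:
  fixes B :: "complex mat"
  assumes B: "B \<in> carrier_mat n n" and n: "0 < n"
  shows "norm c * spectral_radius B \<le> spectral_radius (c \<cdot>\<^sub>m B)"
proof -
  obtain e where e: "e \<in> spectrum B" "spectral_radius B = norm e"
    using spectral_radius_mem_max(1)[OF B n] by auto
  then obtain v where "eigenvector B v e" unfolding spectrum_def eigenvalue_def by auto
  then have "c * e \<in> spectrum (c \<cdot>\<^sub>m B)"
    using eigenvector_smult_mat[OF B] unfolding spectrum_def eigenvalue_def by blast
  then have "norm (c * e) \<le> spectral_radius (c \<cdot>\<^sub>m B)"
    using spectral_radius_mem_max(2)[of "c \<cdot>\<^sub>m B" n] B n by auto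
  then show ?thesis using e by (simp add: norm_mult)
qed

lemma rho_nonneg:
  assumes "A \<in> carrier_mat n n" "0 < n"
  shows "0 \<le> rho A"
  using spectral_radius_mem_max(1)[of "map_mat complex_of_real A" n] assms
  unfolding rho_def by auto

lemma rho_le_if_matvec_le:
  assumes A: "A \<in> carrier_mat n n" and n: "0 < n" and nn: "nonneg_mat A"
    and x: "\<And>i. i < n \<Longrightarrow> 0 < x i" and le: "\<And>i. i < n \<Longrightarrow> matvec A x i \<le> lam * x i"
  shows "rho A \<le> lam"
proof -
  define B where "B = map_mat complex_of_real A"
  have B: "B \<in> carrier_mat n n" using A by (simp add: B_def)
  obtain e v where re: "rho A = norm e" and ev: "eigenvector B v e"
    using spectral_radius_mem_max(1)[OF B n]
    unfolding rho_def B_def spectrum_def eigenvalue_def by auto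
  then have v: "v \<in> carrier_vec n" "v \<noteq> 0\<^sub>v n" and Bv: "B *\<^sub>v v = e \<cdot>\<^sub>v v"
    using B unfolding eigenvector_def by auto
  define M where "M = Max ((\<lambda>j. norm (v $ j) / x j) ` {..<n})"
  have "M \<in> (\<lambda>j. norm (v $ j) / x j) ` {..<n}" unfolding M_def using n by (intro Max_in) auto
  then obtain k where k: "k < n" and Mk: "M = norm (v $ k) / x k" by auto
  have vM: "norm (v $ j) \<le> M * x j" if "j < n" for j
  proof -
    have "norm (v $ j) / x j \<le> M" unfolding M_def using that by (intro Max_ge) auto
    then show ?thesis using x[OF that] by (simp add: divide_le_eq)
  qed
  obtain j where j: "j < n" "v $ j \<noteq> 0"
    using v by (metis eq_vecI carrier_vecD index_zero_vec)
  have "0 < M * x j" using vM[of j] j by (meson less_le_trans zero_less_norm_iff)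
  then have M: "0 < M" using x[OF j(1)] by (simp add: zero_less_mult_iff)
  then have Mxk: "0 < M * x k" using x[OF k] by simp
  have "norm e * (M * x k) = norm ((B *\<^sub>v v) $ k)"
    using Bv v k Mk x[OF k] by (simp add: norm_mult)
  also have "\<dots> \<le> (\<Sum>j<n. norm (B $$ (k, j) * v $ j))"
    unfolding mult_mat_vec_index_sum[OF B v(1) k] by (rule norm_sum)
  also have "\<dots> \<le> (\<Sum>j<n. A $$ (k, j) * (M * x j))"
    using A nn k vM unfolding nonneg_mat_def B_def
    by (intro sum_mono) (auto simp: norm_mult intro!: mult_left_mono)
  also have "\<dots> = M * matvec A x k"
    using A by (simp add: matvec_def sum_distrib_left ac_simps)
  also have "\<dots> \<le> M * (lam * x k)"
    using le[OF k] M by (simp add: mult_left_mono)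
  also have "\<dots> = lam * (M * x k)" by simp
  finally show ?thesis using Mxk re by (simp add: mult_le_cancel_right)
qed

text \<open>If \<open>\<rho>(A) < \<mu> < \<lambda>\<close>, the powers of \<open>A / \<mu>\<close> stay bounded, while \<open>A x \<ge> \<lambda> x\<close> makes
  \<open>(A / \<mu>)\<^sup>k x\<close> grow like \<open>(\<lambda> / \<mu>)\<^sup>k\<close>.\<close>

lemma rho_ge_if_matvec_ge:
  assumes A: "A \<in> carrier_mat n n" and n: "0 < n" and nn: "nonneg_mat A"
    and x: "\<And>i. i < n \<Longrightarrow> 0 < x i" and ge: "\<And>i. i < n \<Longrightarrow> lam * x i \<le> matvec A x i"
  shows "lam \<le> rho A"
proof (rule ccontr)
  assume "\<not> lam \<le> rho A"
  define mu where "mu = (rho A + lam) / 2"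
  have mu: "0 < mu" "rho A < mu" "mu < lam"
    using \<open>\<not> lam \<le> rho A\<close> rho_nonneg[OF A n] unfolding mu_def by auto
  define R where "R = (1 / mu) \<cdot>\<^sub>m A"
  define q where "q = lam / mu"
  have R: "R \<in> carrier_mat n n" "nonneg_mat R"
    using A nn mu(1) unfolding R_def nonneg_mat_def by (auto intro!: mult_nonneg_nonneg)
  have q: "1 < q" using mu unfolding q_def by simp
  have "complex_of_real mu \<cdot>\<^sub>m map_mat complex_of_real R = map_mat complex_of_real A"
    using A mu(1) unfolding R_def by (intro eq_matI) auto
  then have "mu * spectral_radius (map_mat complex_of_real R) \<le> rho A"
    using spectral_radius_smult_mat_ge[of "map_mat complex_of_real R" n "complex_of_real mu"] R n mu(1)
    unfolding rho_def by simp
  then have "mu * spectral_radius (map_mat complex_of_real R) < mu * 1" using mu(2) by simp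
  then have "spectral_radius (map_mat complex_of_real R) < 1"
    using mu(1) by (simp only: mult_less_cancel_left_pos)
  then obtain C where C: "\<And>k. norm_bound (map_mat complex_of_real R ^\<^sub>m k) C"
    using spectral_radius_jnf_norm_bound_less_1_upper_triangular[of _ n] R(1) by fastforce
  have Rx: "q * x i \<le> matvec R x i" if "i < n" for i
  proof -
    have "matvec R x i = matvec A x i / mu"
      using A that unfolding R_def matvec_def by (simp add: sum_divide_distrib)
    then show ?thesis using ge[OF that] mu(1) unfolding q_def by (simp add: divide_right_mono)
  qed
  obtain k where k: "C * (\<Sum>j<n. x j) / x 0 < q ^ k" using real_arch_pow[OF q] by blast
  have "q ^ k * x 0 \<le> matvec (R ^\<^sub>m k) x 0"
    using matvec_pow_ge[OF R(1,2) _ Rx n] q by simp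
  also have "\<dots> \<le> (\<Sum>j<n. C * x j)"
    unfolding matvec_def carrier_matD(2)[OF pow_carrier_mat[OF R(1)]]
  proof (intro sum_mono mult_right_mono)
    fix j assume "j \<in> {..<n}"
    then have j: "j < n" by simp
    have "map_mat complex_of_real R ^\<^sub>m k = map_mat complex_of_real (R ^\<^sub>m k)"
      by (rule of_real_hom.mat_hom_pow[OF R(1), symmetric])
    then have "norm (complex_of_real ((R ^\<^sub>m k) $$ (0, j))) \<le> C"
      using C[of k] j n R(1) unfolding norm_bound_def by auto
    then show "(R ^\<^sub>m k) $$ (0, j) \<le> C" by simp
    show "0 \<le> x j" using x[OF j] by simp
  qed
  also have "\<dots> = C * (\<Sum>j<n. x j)" by (simp add: sum_distrib_left)
  finally show False using k x[OF n] by (simp add: pos_divide_less_eq)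
qed

definition matvec_I_plus :: "real mat \<Rightarrow> (nat \<Rightarrow> real) \<Rightarrow> nat \<Rightarrow> real" where
  "matvec_I_plus A v i = v i + matvec A v i"

lemma matvec_I_plus_pow_ge:
  assumes A: "A \<in> carrier_mat n n" and nn: "nonneg_mat A"
    and v: "\<And>j. j < n \<Longrightarrow> 0 \<le> v j" and i: "i < n"
  shows "v i \<le> (matvec_I_plus A ^^ k) v i"
  using i
proof (induction k arbitrary: i)
  case 0
  then show ?case by simp
next
  case (Suc k)
  have "0 \<le> matvec A ((matvec_I_plus A ^^ k) v) i"
    using A nn Suc.prems Suc.IH v by (intro matvec_nonneg) (auto intro: order_trans)
  moreover have "v i \<le> (matvec_I_plus A ^^ k) v i" using Suc by simp
  ultimately show ?case by (simp add: matvec_I_plus_def[of A "(matvec_I_plus A ^^ k) v"])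
qed

lemma matvec_I_plus_pow_residual:
  "(matvec_I_plus A ^^ k) (\<lambda>i. matvec A x i - lam * x i)
     = (\<lambda>i. matvec A ((matvec_I_plus A ^^ k) x) i - lam * (matvec_I_plus A ^^ k) x i)"
proof (induction k)
  case 0
  then show ?case by simp
next
  case (Suc k)
  define w where "w = (matvec_I_plus A ^^ k) x"
  show ?case
    unfolding funpow.simps comp_def Suc.IH w_def[symmetric]
    by (rule ext) (simp add: matvec_I_plus_def matvec_add matvec_diff_scale algebra_simps)
qed

lemma matvec_I_plus_zeros_subset:
  assumes A: "A \<in> carrier_mat n n" and nn: "nonneg_mat A" and v: "\<And>j. j < n \<Longrightarrow> 0 \<le> v j"
  shows "{i. i < n \<and> matvec_I_plus A v i = 0} \<subseteq> {i. i < n \<and> v i = 0}"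
proof (intro subsetI, elim CollectE conjE, intro CollectI conjI)
  fix i assume i: "i < n" and zero: "matvec_I_plus A v i = 0"
  have "0 \<le> matvec A v i" using A nn v i by (intro matvec_nonneg) auto
  then show "v i = 0" using zero v[OF i] unfolding matvec_I_plus_def by linarith
qed

text \<open>Irreducibility forbids a proper nonempty zero set of \<open>v \<ge> 0\<close> to be preserved by
  \<open>I + A\<close>: it would be a block of indices not reached by \<open>A\<close>.\<close>

lemma matvec_I_plus_zeros_psubset:
  assumes A: "A \<in> carrier_mat n n" and nn: "nonneg_mat A" and irr: "irreducible_mat A"
    and v: "\<And>j. j < n \<Longrightarrow> 0 \<le> v j"
    and nonempty: "{i. i < n \<and> v i = 0} \<noteq> {}" and proper: "{i. i < n \<and> v i = 0} \<noteq> {..<n}"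
  shows "{i. i < n \<and> matvec_I_plus A v i = 0} \<subset> {i. i < n \<and> v i = 0}"
proof -
  define Z where "Z = {i. i < n \<and> v i = 0}"
  have "Z \<noteq> {i. i < n \<and> matvec_I_plus A v i = 0}"
  proof
    assume eq: "Z = {i. i < n \<and> matvec_I_plus A v i = 0}"
    have "A $$ (i, j) = 0" if i: "i \<in> Z" and j: "j \<in> {..<n} - Z" for i j
    proof -
      have i_n: "i < n" and "v i = 0" "matvec_I_plus A v i = 0"
        using i eq unfolding Z_def by auto
      then have "(\<Sum>l<n. A $$ (i, l) * v l) = 0"
        using A unfolding matvec_I_plus_def matvec_def by simp
      moreover have "\<forall>l\<in>{..<n}. 0 \<le> A $$ (i, l) * v l"
        using A nn v i_n unfolding nonneg_mat_def by auto
      ultimately have "\<forall>l\<in>{..<n}. A $$ (i, l) * v l = 0"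
        using sum_nonneg_eq_0_iff[of "{..<n}" "\<lambda>l. A $$ (i, l) * v l"] by simp
      moreover have "j < n" "v j \<noteq> 0" using j unfolding Z_def by auto
      ultimately show ?thesis by auto
    qed
    moreover have "Z \<noteq> {}" "Z \<subset> {..<dim_row A}"
      using nonempty proper A unfolding Z_def by auto
    ultimately have "reducible_mat A"
      unfolding reducible_mat_def using A by (intro exI[of _ Z]) simp
    then show False using irr unfolding irreducible_mat_def by simp
  qed
  then show ?thesis using matvec_I_plus_zeros_subset[of A n v, OF A nn v] unfolding Z_def by blast
qed

lemma irreducible_matvec_I_plus_pow_pos:
  assumes A: "A \<in> carrier_mat n n" and nn: "nonneg_mat A" and irr: "irreducible_mat A"
    and v: "\<And>j. j < n \<Longrightarrow> 0 \<le> v j" and i0: "i0 < n" "0 < v i0" and i: "i < n"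
  shows "0 < (matvec_I_plus A ^^ (n - 1)) v i"
proof -
  define Z where "Z k = {i. i < n \<and> (matvec_I_plus A ^^ k) v i = 0}" for k
  have nonneg: "0 \<le> (matvec_I_plus A ^^ k) v j" if "j < n" for j k
    using matvec_I_plus_pow_ge[of A n v, OF A nn v that, where k = k] v[OF that] by simp
  have fin: "finite (Z k)" for k unfolding Z_def by simp
  have Z_Suc: "Z (Suc k) = {i. i < n \<and> matvec_I_plus A ((matvec_I_plus A ^^ k) v) i = 0}" for k
    unfolding Z_def by simp
  have shrink: "Z k = {} \<or> card (Z k) + k < n" for k
  proof (induction k)
    case 0
    have "Z 0 \<subseteq> {..<n} - {i0}" using i0 unfolding Z_def by auto
    then have "card (Z 0) \<le> n - 1" using i0 card_mono[of "{..<n} - {i0}" "Z 0"] by simp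
    then show ?case using i0 by linarith
  next
    case (Suc k)
    show ?case
    proof (cases "Z k = {}")
      case True
      then show ?thesis
        using matvec_I_plus_zeros_subset[of A n "(matvec_I_plus A ^^ k) v", OF A nn nonneg]
        unfolding Z_Suc Z_def[of k] by blast
    next
      case False
      then have card: "card (Z k) + k < n" using Suc.IH by simp
      then have "Z k \<noteq> {..<n}" by (metis card_lessThan not_add_less1)
      then have "Z (Suc k) \<subset> Z k"
        using matvec_I_plus_zeros_psubset[of A n "(matvec_I_plus A ^^ k) v", OF A nn irr nonneg]
          False unfolding Z_Suc Z_def[of k] by blast
      then have "card (Z (Suc k)) < card (Z k)" using fin by (intro psubset_card_mono)
      then show ?thesis using card by simp
    qed
  qed
  have "Z (n - 1) = {}"
  proof (cases "Z (n - 1) = {}")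
    case False
    then have "card (Z (n - 1)) = 0" using shrink[of "n - 1"] by simp
    then show ?thesis using fin by simp
  qed
  then have "(matvec_I_plus A ^^ (n - 1)) v i \<noteq> 0" using i unfolding Z_def by blast
  then show ?thesis using nonneg[OF i, of "n - 1"] by simp
qed

text \<open>\<open>(I + A)\<^sup>n\<^sup>-\<^sup>1\<close> turns the nonzero residual \<open>A x - \<lambda> x \<ge> 0\<close> into a positive one, so \<open>\<lambda>\<close> can
  be raised a little while keeping a positive subinvariant vector.\<close>

lemma rho_gt_if_matvec_ge_neq:
  assumes A: "A \<in> carrier_mat n n" and n: "0 < n" and nn: "nonneg_mat A"
    and irr: "irreducible_mat A"
    and x: "\<And>i. i < n \<Longrightarrow> 0 < x i" and ge: "\<And>i. i < n \<Longrightarrow> lam * x i \<le> matvec A x i"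
    and i0: "i0 < n" "lam * x i0 < matvec A x i0"
  shows "lam < rho A"
proof -
  define y where "y = (matvec_I_plus A ^^ (n - 1)) x"
  define u where "u i = matvec A y i - lam * y i" for i
  have y: "0 < y i" if "i < n" for i
  proof -
    have "x i \<le> y i"
      unfolding y_def using x by (intro matvec_I_plus_pow_ge[of A n x, OF A nn]) (auto simp: less_imp_le that)
    then show ?thesis using x[OF that] by simp
  qed
  have u: "0 < u i" if "i < n" for i
  proof -
    have "u = (matvec_I_plus A ^^ (n - 1)) (\<lambda>i. matvec A x i - lam * x i)"
      unfolding u_def y_def matvec_I_plus_pow_residual ..
    then show ?thesis
      using irreducible_matvec_I_plus_pow_pos[OF A nn irr _ i0(1) _ that] ge i0 by simp
  qed
  define m where "m = Min ((\<lambda>i. u i / y i) ` {..<n})"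
  have "m \<in> (\<lambda>i. u i / y i) ` {..<n}" unfolding m_def using n by (intro Min_in) auto
  then have m: "0 < m" using u y by force
  have "(lam + m) * y i \<le> matvec A y i" if "i < n" for i
  proof -
    have "m \<le> u i / y i" unfolding m_def using that by (intro Min_le) auto
    then show ?thesis using y[OF that] unfolding u_def by (simp add: le_divide_eq algebra_simps)
  qed
  then have "lam + m \<le> rho A" using rho_ge_if_matvec_ge[of A n y, OF A n nn y] by blast
  then show ?thesis using m by simp
qed

lemma rho_ge_and_eq_iff_matvec_eq:
  assumes A: "A \<in> carrier_mat n n" and n: "0 < n" and nn: "nonneg_mat A"
    and irr: "irreducible_mat A"
    and x: "\<And>i. i < n \<Longrightarrow> 0 < x i" and ge: "\<And>i. i < n \<Longrightarrow> lam * x i \<le> matvec A x i"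
  shows "lam \<le> rho A \<and> (rho A = lam \<longleftrightarrow> (\<forall>i<n. matvec A x i = lam * x i))"
proof -
  have "lam \<le> rho A" using rho_ge_if_matvec_ge[of A n x, OF A n nn x ge] .
  moreover have "rho A = lam" if "\<forall>i<n. matvec A x i = lam * x i"
    using rho_le_if_matvec_le[of A n x, OF A n nn x] that \<open>lam \<le> rho A\<close> by force
  moreover have "\<forall>i<n. matvec A x i = lam * x i" if "rho A = lam"
    using rho_gt_if_matvec_ge_neq[of A n x, OF A n nn irr x ge] that ge by force
  ultimately show ?thesis by blast
qed

lemma rho_ge_and_eq_iff_row_sums_eq:
  assumes A: "A \<in> carrier_mat n n" and n: "0 < n" and nn: "nonneg_mat A"
    and irr: "irreducible_mat A" and m: "\<And>i. i < n \<Longrightarrow> m \<le> row_sum A i"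
  shows "m \<le> rho A \<and> (rho A = m \<longleftrightarrow> (\<forall>i<n. row_sum A i = m))"
  using rho_ge_and_eq_iff_matvec_eq[of A n "\<lambda>_. 1" m, OF A n nn irr] m
  by (simp add: row_sum_eq_matvec_one)

lemma sum_diag_off_diag:
  fixes S T :: "'a :: comm_ring" and n :: nat
  assumes "i < n"
  shows "(\<Sum>j<n. (if i = j then S else T) * d j) = T * (\<Sum>j<n. d j) + (S - T) * d i"
proof -
  have "(\<Sum>j<n. (if i = j then S else T) * d j) = (\<Sum>j<n. T * d j + (if i = j then (S - T) * d j else 0))"
    by (intro sum.cong) (auto simp: left_diff_distrib)
  also have "\<dots> = T * (\<Sum>j<n. d j) + (S - T) * d i"
    using assms by (simp add: sum.distrib sum_distrib_left)
  finally show ?thesis .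
qed

lemma matvec_residual_quadratic_root:
  assumes A: "A \<in> carrier_mat n n" and i: "i < n" and c: "c \<noteq> 0"
    and root: "c\<^sup>2 - (m - S + T) * c = T * (\<Sum>j<n. row_sum A j - m)"
  shows "matvec A (\<lambda>j. 1 + (row_sum A j - m) / c) i - (c + S - T) * (1 + (row_sum A i - m) / c)
       = (\<Sum>j<n. (A $$ (i, j) - (if i = j then S else T)) * (row_sum A j - m)) / c"
proof -
  define d where "d j = row_sum A j - m" for j
  define E where "E = (\<Sum>j<n. (A $$ (i, j) - (if i = j then S else T)) * d j)"
  have "c * matvec A (\<lambda>j. 1 + d j / c) i = c * row_sum A i + (\<Sum>j<n. A $$ (i, j) * d j)"
    using A c by (simp add: matvec_def row_sum_def algebra_simps sum.distrib sum_distrib_left)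
  also have "(\<Sum>j<n. A $$ (i, j) * d j) = E + T * (\<Sum>j<n. d j) + (S - T) * d i"
    using sum_diag_off_diag[OF i, of S T d] unfolding E_def
    by (simp add: left_diff_distrib sum_subtractf)
  finally have "c * matvec A (\<lambda>j. 1 + d j / c) i
      = c * (m + d i) + E + (c\<^sup>2 - (m - S + T) * c) + (S - T) * d i"
    using root unfolding d_def by simp
  moreover have "c * ((c + S - T) * (1 + d i / c)) = (c + S - T) * (c + d i)"
    using c by (simp add: field_simps)
  ultimately have "c * (matvec A (\<lambda>j. 1 + d j / c) i - (c + S - T) * (1 + d i / c)) = E"
    by (simp add: right_diff_distrib power2_eq_square algebra_simps)
  then show ?thesis
    unfolding d_def[symmetric] E_def[symmetric] using c by (simp add: eq_divide_eq mult.commute)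
qed

lemma rho_ge_and_eq_iff_quadratic_bound:
  assumes A: "A \<in> carrier_mat n n" and n: "0 < n" and nn: "nonneg_mat A"
    and irr: "irreducible_mat A"
    and S: "\<And>i. i < n \<Longrightarrow> S \<le> A $$ (i, i)"
    and T: "\<And>i j. i < n \<Longrightarrow> j < n \<Longrightarrow> i \<noteq> j \<Longrightarrow> T \<le> A $$ (i, j)" and T0: "0 \<le> T"
    and m: "\<And>i. i < n \<Longrightarrow> m \<le> row_sum A i" and mST: "S - T < m"
  defines "lam \<equiv> (m + S - T + sqrt ((m - S + T)\<^sup>2 + 4 * T * (\<Sum>j<n. row_sum A j - m))) / 2"
  shows "lam \<le> rho A \<and> (rho A = lam \<longleftrightarrow>
           (\<forall>i<n. \<forall>j<n. row_sum A j \<noteq> m \<longrightarrow> A $$ (i, j) = (if i = j then S else T)))"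
proof -
  define D where "D = (\<Sum>j<n. row_sum A j - m)"
  define c where "c = (m - S + T + sqrt ((m - S + T)\<^sup>2 + 4 * T * D)) / 2"
  define x where "x j = 1 + (row_sum A j - m) / c" for j
  define e where "e i = (\<Sum>j<n. (A $$ (i, j) - (if i = j then S else T)) * (row_sum A j - m))"
    for i
  have D: "0 \<le> D" unfolding D_def using m by (auto intro!: sum_nonneg)
  have "0 \<le> sqrt ((m - S + T)\<^sup>2 + 4 * T * D)" using D T0 by simp
  moreover have "0 < m - S + T" using mST by simp
  ultimately have c: "0 < c" unfolding c_def by (simp add: add_pos_nonneg)
  have "(sqrt ((m - S + T)\<^sup>2 + 4 * T * D))\<^sup>2 = (m - S + T)\<^sup>2 + 4 * T * D"
    using D T0 by simp
  then have root: "c\<^sup>2 - (m - S + T) * c = T * D"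
    unfolding c_def by (simp add: power2_eq_square field_simps)
  have lam: "lam = c + S - T" unfolding lam_def c_def D_def by (simp add: field_simps)
  have x: "0 < x i" if "i < n" for i
    unfolding x_def using m[OF that] c by (simp add: add_pos_nonneg)
  have term_nonneg: "0 \<le> (A $$ (i, j) - (if i = j then S else T)) * (row_sum A j - m)"
    if "i < n" "j < n" for i j
    using S T m that by (auto intro!: mult_nonneg_nonneg)
  have residual: "matvec A x i - lam * x i = e i / c" if "i < n" for i
    using matvec_residual_quadratic_root[OF A that _ root[unfolded D_def]] c
    unfolding x_def lam e_def by simp
  have "lam * x i \<le> matvec A x i" if "i < n" for i
  proof -
    have "0 \<le> e i" unfolding e_def using term_nonneg that by (intro sum_nonneg) auto
    then have "0 \<le> e i / c" using c by simp
    then show ?thesis using residual[OF that] by linarith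
  qed
  then have main: "lam \<le> rho A \<and> (rho A = lam \<longleftrightarrow> (\<forall>i<n. matvec A x i = lam * x i))"
    using rho_ge_and_eq_iff_matvec_eq[of A n x, OF A n nn irr x] by blast
  have "(\<forall>i<n. matvec A x i = lam * x i) \<longleftrightarrow> (\<forall>i<n. e i = 0)"
    using residual c by auto
  also have "\<dots> \<longleftrightarrow> (\<forall>i<n. \<forall>j<n. (A $$ (i, j) - (if i = j then S else T)) * (row_sum A j - m) = 0)"
  proof -
    have "e i = 0 \<longleftrightarrow> (\<forall>j<n. (A $$ (i, j) - (if i = j then S else T)) * (row_sum A j - m) = 0)"
      if "i < n" for i
      unfolding e_def using term_nonneg[OF that] by (subst sum_nonneg_eq_0_iff) auto
    then show ?thesis by auto
  qed
  also have "\<dots> \<longleftrightarrow> (\<forall>i<n. \<forall>j<n. row_sum A j \<noteq> m \<longrightarrow> A $$ (i, j) = (if i = j then S else T))"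
    by auto
  finally show ?thesis using main by simp
qed

lemma Min_diag_le:
  "i < n \<Longrightarrow> Min {A $$ (k, k) | k. k < n} \<le> A $$ (i, i)"
  by (intro Min_le) auto

lemma finite_off_diag_entries: "finite {A $$ (k, l) | k l. k < n \<and> l < n \<and> k \<noteq> l}"
  by (rule finite_subset[of _ "(\<lambda>(k, l). A $$ (k, l)) ` ({..<n} \<times> {..<n})"]) auto

lemma Min_off_diag_le:
  "i < n \<Longrightarrow> j < n \<Longrightarrow> i \<noteq> j \<Longrightarrow> Min {A $$ (k, l) | k l. k < n \<and> l < n \<and> k \<noteq> l} \<le> A $$ (i, j)"
  using finite_off_diag_entries by (intro Min_le) auto

lemma Min_off_diag_nonneg:
  assumes "A \<in> carrier_mat n n" "nonneg_mat A" "2 \<le> n"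
  shows "0 \<le> Min {A $$ (k, l) | k l. k < n \<and> l < n \<and> k \<noteq> l}"
proof -
  have "A $$ (0, 1) \<in> {A $$ (k, l) | k l. k < n \<and> l < n \<and> k \<noteq> l}"
    using assms(3) by (intro CollectI exI[of _ 0] exI[of _ 1]) auto
  then have nonempty: "{A $$ (k, l) | k l. k < n \<and> l < n \<and> k \<noteq> l} \<noteq> {}" by blast
  have "\<forall>a \<in> {A $$ (k, l) | k l. k < n \<and> l < n \<and> k \<noteq> l}. 0 \<le> a"
    using assms(1,2) unfolding nonneg_mat_def by auto
  then show ?thesis using Min_ge_iff[OF finite_off_diag_entries nonempty] by blast
qed

lemma row_sum_ge_two_entries:
  assumes "A \<in> carrier_mat n n" "nonneg_mat A" "i < n" "j < n" "i \<noteq> j"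
  shows "A $$ (i, i) + A $$ (i, j) \<le> row_sum A i"
proof -
  have "(\<Sum>l\<in>{i, j}. A $$ (i, l)) \<le> (\<Sum>l<n. A $$ (i, l))"
    using assms unfolding nonneg_mat_def by (intro sum_mono2) auto
  then show ?thesis using assms by (simp add: row_sum_def)
qed

lemma column_pattern_iff_leading_block:
  fixes r :: "nat \<Rightarrow> real"
  assumes n: "0 < n" and anti: "\<And>i j. i \<le> j \<Longrightarrow> j < n \<Longrightarrow> r j \<le> r i"
  shows "(\<forall>i<n. \<forall>j<n. r j \<noteq> r (n - 1) \<longrightarrow> A $$ (i, j) = (if i = j then S else T)) \<longleftrightarrow>
    (\<forall>i<n. r i = r 0) \<or> (\<exists>t. 1 \<le> t \<and> t \<le> n - 1 \<and> (\<forall>k<t. A $$ (k, k) = S) \<and>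
      (\<forall>k<n. \<forall>l<t. k \<noteq> l \<longrightarrow> A $$ (k, l) = T) \<and> (\<forall>k. t \<le> k \<and> k < n \<longrightarrow> r k = r t))"
    (is "?pattern \<longleftrightarrow> ?const \<or> ?split")
proof
  assume pattern: ?pattern
  show "?const \<or> ?split"
  proof (cases ?const)
    case False
    then obtain i where i: "i < n" "r i \<noteq> r 0" by blast
    have "r 0 \<noteq> r (n - 1)"
    proof
      assume "r 0 = r (n - 1)"
      moreover have "r i \<le> r 0" "r (n - 1) \<le> r i" using anti[of 0 i] anti[of i "n - 1"] i by auto
      ultimately show False using i(2) by simp
    qed
    define t where "t = (LEAST j. r j = r (n - 1))"
    have t: "r t = r (n - 1)" "t \<le> n - 1"
      unfolding t_def by (auto intro: LeastI Least_le)
    have below: "r k \<noteq> r (n - 1)" if "k < t" for k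
      using not_less_Least[of k "\<lambda>j. r j = r (n - 1)"] that unfolding t_def by blast
    have entries: "A $$ (k, l) = (if k = l then S else T)" if "k < n" "l < t" for k l
      using pattern below[OF that(2)] that t(2) by simp
    have t1: "1 \<le> t" using t(1) \<open>r 0 \<noteq> r (n - 1)\<close> by (cases t) auto
    have tail: "\<forall>k. t \<le> k \<and> k < n \<longrightarrow> r k = r t"
    proof (intro allI impI)
      fix k assume k: "t \<le> k \<and> k < n"
      then have "k \<le> n - 1" by linarith
      then show "r k = r t" using anti[of t k] anti[of k "n - 1"] k t(1) by simp
    qed
    have diag: "\<forall>k<t. A $$ (k, k) = S" and off_diag: "\<forall>k<n. \<forall>l<t. k \<noteq> l \<longrightarrow> A $$ (k, l) = T"
      using entries t(2) by auto
    have ?split by (intro exI[of _ t] conjI t1 t(2) diag off_diag tail)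
    then show ?thesis ..
  qed (rule disjI1)
next
  assume "?const \<or> ?split"
  then show ?pattern
  proof
    assume const: ?const
    have "r j = r (n - 1)" if "j < n" for j
      using const[rule_format, of j] const[rule_format, of "n - 1"] that n by simp
    then show ?pattern by blast
  next
    assume ?split
    then obtain t where t: "1 \<le> t" "t \<le> n - 1" "\<forall>k<t. A $$ (k, k) = S"
      "\<forall>k<n. \<forall>l<t. k \<noteq> l \<longrightarrow> A $$ (k, l) = T" "\<forall>k. t \<le> k \<and> k < n \<longrightarrow> r k = r t"
      by blast
    have "j < t" if "j < n" "r j \<noteq> r (n - 1)" for j
    proof (rule ccontr)
      assume "\<not> j < t"
      then have "r j = r t" "r (n - 1) = r t"
        using t(5)[rule_format, of j] t(5)[rule_format, of "n - 1"] t(2) that n by auto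
      then show False using that(2) by simp
    qed
    then show ?pattern using t(3,4) by auto
  qed
qed

theorem corollary3:
  fixes A :: "real mat" and n :: nat
  assumes "n \<ge> 2"
    and "A \<in> carrier_mat n n"
    and "nonneg_mat A"
    and "irreducible_mat A"
    and "\<forall>i j. i \<le> j \<and> j < n \<longrightarrow> row_sum A i \<ge> row_sum A j"
  defines "S \<equiv> Min {A $$ (i, i) | i. i < n}"
    and "T \<equiv> Min {A $$ (i, j) | i j. i < n \<and> j < n \<and> i \<noteq> j}"
  shows "(rho A \<ge> (row_sum A (n - 1) + S - T +
           sqrt ((row_sum A (n - 1) - S + T)\<^sup>2
                 + 4 * T * (\<Sum>k<n - 1. row_sum A k - row_sum A (n - 1)))) / 2)
    \<and> (rho A = (row_sum A (n - 1) + S - T +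
           sqrt ((row_sum A (n - 1) - S + T)\<^sup>2
                 + 4 * T * (\<Sum>k<n - 1. row_sum A k - row_sum A (n - 1)))) / 2
         \<longleftrightarrow> ((\<forall>i<n. row_sum A i = row_sum A 0) \<or>
              (T > 0 \<and> (\<exists>t. 1 \<le> t \<and> t \<le> n - 1 \<and>
                  (\<forall>k<t. A $$ (k, k) = S) \<and>
                  (\<forall>k<n. \<forall>l<t. k \<noteq> l \<longrightarrow> A $$ (k, l) = T) \<and>
                  (\<forall>k. t \<le> k \<and> k < n \<longrightarrow> row_sum A k = row_sum A t)))))"
proof -
  let ?r = "row_sum A" and ?m = "row_sum A (n - 1)"
  have n: "0 < n" using assms(1) by simp
  have anti: "\<And>i j. i \<le> j \<Longrightarrow> j < n \<Longrightarrow> ?r j \<le> ?r i" using assms(5) by blast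
  have lower: "\<And>i. i < n \<Longrightarrow> ?m \<le> ?r i" using anti n by simp
  have S: "\<And>i. i < n \<Longrightarrow> S \<le> A $$ (i, i)" unfolding S_def by (rule Min_diag_le)
  have T: "\<And>i j. i < n \<Longrightarrow> j < n \<Longrightarrow> i \<noteq> j \<Longrightarrow> T \<le> A $$ (i, j)"
    unfolding T_def by (rule Min_off_diag_le)
  have T0: "0 \<le> T" unfolding T_def using Min_off_diag_nonneg assms(1-3) by blast
  have ST: "S + T \<le> ?m"
    using row_sum_ge_two_entries[of A n "n - 1" 0] S[of "n - 1"] T[of "n - 1" 0] assms(1-3) by simp
  have "(\<Sum>k<n. ?r k - ?m) = (\<Sum>k<Suc (n - 1). ?r k - ?m)" using n by simp
  then have sum_eq: "(\<Sum>k<n - 1. ?r k - ?m) = (\<Sum>k<n. ?r k - ?m)" by simp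
  show ?thesis
  proof (cases "T = 0")
    case True
    have "sqrt ((?m - S + T)\<^sup>2 + 4 * T * (\<Sum>k<n - 1. ?r k - ?m)) = ?m - S"
      using True ST by simp
    moreover have "(\<forall>i<n. ?r i = ?r 0) \<longleftrightarrow> (\<forall>i<n. ?r i = ?m)"
      using lower anti[of 0] n by (metis diff_less le_antisym less_one)
    ultimately show ?thesis
      using rho_ge_and_eq_iff_row_sums_eq[OF assms(2) n assms(3,4) lower] True by simp
  next
    case False
    then have "0 < T" using T0 by simp
    then show ?thesis
      using rho_ge_and_eq_iff_quadratic_bound[OF assms(2) n assms(3,4) S T T0 lower] ST
        column_pattern_iff_leading_block[where r = "row_sum A" and A = A and S = S and T = T, OF n anti] sum_eq by simp
  qed
qed

end
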